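(* Let $T$ be a supercritical Galton–Watson tree with finite alphabet $\mathbb{A}$, weights $\{r_i\}_{i\in\mathbb{A}}\subset(0,1)$ and offspring distribution $W$, and let $\delta$ satisfy $\mathbb{E}\big(\sum_{i\in W}r_i^\delta\big)=1$. Then for every $\alpha<\delta$ and every $\varepsilon>0$ there exists $\rho_0>0$ such that for all $\rho<\rho_0$, $\mathbb{P}\big(|T_{\Pi_\rho}|>\rho^{-\alpha}\ \big|\ \text{nonextinction}\big)>1-\varepsilon$.
   Context: For $i=i_1\dots i_n\in\mathbb{A}^*$, $r_i=r_{i_1}\cdots r_{i_n}$; $r_{\min}=\min_ir_i$; for $\rho\in(0,r_{\min})$, $\Pi_\rho=\{i\in\mathbb{A}^*: r_i\le\rho<r_{i_1}\cdots r_{i_{|i|-1}}\}$ and $T_{\Pi_\rho}=T\cap\Pi_\rho$. The Galton–Watson tree with offspring distribution $W$ (random subset of $\mathbb{A}$, $\mathbb{P}(i\in W)>0$ for all $i$) is $T_0=\{\emptyset\}$, $T_n=\{aj:a\in T_{n-1},j\in W_a\}$ with independent copies $W_a$; supercritical means $\mathbb{E}|W|>1$; nonextinction means all $T_n\ne\emptyset$. *)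

theory Defs
  imports "HOL-Probability.Probability"
begin

definition word_weight :: "('a \<Rightarrow> real) \<Rightarrow> 'a list \<Rightarrow> real" where
  "word_weight r i = (\<Prod>k<length i. r (i ! k))"

definition cut_set :: "('a \<Rightarrow> real) \<Rightarrow> real \<Rightarrow> 'a list set" where
  "cut_set r \<rho> = {i. i \<noteq> [] \<and> word_weight r i \<le> \<rho> \<and> \<rho> < word_weight r (butlast i)}"

text \<open>Sample space of the Galton-Watson tree: independent copies W_a of W, one for each word a.\<close>
definition gw_space :: "'a set pmf \<Rightarrow> ('a list \<Rightarrow> 'a set) measure" where
  "gw_space W = PiM UNIV (\<lambda>_. measure_pmf W)"

fun gw_gen :: "('a list \<Rightarrow> 'a set) \<Rightarrow> nat \<Rightarrow> 'a list set" where
  "gw_gen \<omega> 0 = {[]}"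
| "gw_gen \<omega> (Suc n) = {a @ [j] | a j. a \<in> gw_gen \<omega> n \<and> j \<in> \<omega> a}"

definition gw_tree :: "('a list \<Rightarrow> 'a set) \<Rightarrow> 'a list set" where
  "gw_tree \<omega> = (\<Union>n. gw_gen \<omega> n)"

definition nonextinct :: "('a list \<Rightarrow> 'a set) \<Rightarrow> bool" where
  "nonextinct \<omega> \<longleftrightarrow> (\<forall>n. gw_gen \<omega> n \<noteq> {})"

end

theory Submission
  imports Defs
begin

text \<open>Let \<open>N(\<sigma>)\<close> count the tree nodes in the cut set at scale \<open>\<sigma>\<close>. Splitting the tree at the
  root gives \<open>N(\<sigma>) = \<Sum>j\<in>W. N\<^sub>j(\<sigma> / r j)\<close> with independent copies \<open>N\<^sub>j\<close>, so the equation
  \<open>E (\<Sum>j\<in>W. r j powr \<delta>) = 1\<close> yields, by induction over scales, \<open>\<sigma> powr -\<delta> \<le> E N(\<sigma>) \<le> C1 \<sigma> powr -\<delta>\<close>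
  and \<open>E N(\<sigma>)\<^sup>2 \<le> C2 (\<sigma> powr -\<delta>)\<^sup>2\<close>. By Paley-Zygmund, \<open>N(\<sigma>) > \<sigma> powr -\<delta> / 2\<close> with probability
  at least \<open>1 / (4 C2)\<close>. The event that this fails, at the rescaled scale, for every subtree rooted in
  generation \<open>n\<close> has probability at most \<open>F\<^sup>n(s\<^sub>0)\<close>, where \<open>F\<close> is the generating function of \<open>|W|\<close> and
  \<open>s\<^sub>0 = 1 - 1 / (4 C2)\<close>; it contains extinction by generation \<open>n\<close>, of probability \<open>F\<^sup>n(0)\<close>. Both
  iterates converge to the extinction probability \<open>q < 1\<close>, so surviving trees avoid the event with
  conditional probability close to 1, and outside it \<open>N(\<rho>) > \<rho> powr -\<delta> \<theta>\<^sup>n / 2 \<ge> \<rho> powr -\<alpha>\<close> for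
  small \<open>\<rho>\<close>, where \<open>\<theta> = min\<^sub>j r j powr \<delta>\<close>.\<close>

definition subtree :: "'a \<Rightarrow> ('a list \<Rightarrow> 'a set) \<Rightarrow> 'a list \<Rightarrow> 'a set" where
  "subtree j \<omega> = (\<lambda>b. \<omega> (j # b))"

definition tree_word :: "('a list \<Rightarrow> 'a set) \<Rightarrow> 'a list \<Rightarrow> bool" where
  "tree_word \<omega> x \<longleftrightarrow> (\<forall>k<length x. x ! k \<in> \<omega> (take k x))"

lemma tree_word_Nil [simp]: "tree_word \<omega> []"
  by (simp add: tree_word_def)

lemma tree_word_snoc: "tree_word \<omega> (a @ [j]) \<longleftrightarrow> tree_word \<omega> a \<and> j \<in> \<omega> a"
  by (auto simp: tree_word_def nth_append less_Suc_eq)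

lemma tree_word_Cons: "tree_word \<omega> (j # b) \<longleftrightarrow> j \<in> \<omega> [] \<and> tree_word (subtree j \<omega>) b"
  by (simp add: tree_word_def subtree_def All_less_Suc2)

lemma mem_gw_gen_iff: "x \<in> gw_gen \<omega> n \<longleftrightarrow> length x = n \<and> tree_word \<omega> x"
proof (induction n arbitrary: x)
  case (Suc n)
  then show ?case
    by (cases x rule: rev_exhaust) (auto simp: tree_word_snoc)
qed auto

lemma mem_gw_tree_iff: "x \<in> gw_tree \<omega> \<longleftrightarrow> tree_word \<omega> x"
  by (auto simp: gw_tree_def mem_gw_gen_iff)

lemma gw_gen_Suc_subtrees: "gw_gen \<omega> (Suc n) = (\<Union>j\<in>\<omega> []. Cons j ` gw_gen (subtree j \<omega>) n)"
proof (rule set_eqI)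
  fix x
  show "x \<in> gw_gen \<omega> (Suc n) \<longleftrightarrow> x \<in> (\<Union>j\<in>\<omega> []. Cons j ` gw_gen (subtree j \<omega>) n)"
    by (cases x) (auto simp: mem_gw_gen_iff tree_word_Cons image_iff simp del: gw_gen.simps)
qed

lemma gw_gen_empty_mono:
  assumes "gw_gen \<omega> n = {}" and "n \<le> m"
  shows "gw_gen \<omega> m = {}"
  using assms(2) by (induction m rule: dec_induct) (use assms(1) in auto)

lemma word_weight_Nil [simp]: "word_weight r [] = 1"
  by (simp add: word_weight_def)

lemma word_weight_Cons: "word_weight r (j # b) = r j * word_weight r b"
  unfolding word_weight_def length_Cons prod.lessThan_Suc_shift by simp

lemma word_weight_append: "word_weight r (xs @ ys) = word_weight r xs * word_weight r ys"
  by (induction xs) (simp_all add: word_weight_Cons)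

lemma word_weight_pos: "(\<And>i. 0 < r i) \<Longrightarrow> 0 < word_weight r x"
  unfolding word_weight_def by (intro prod_pos) auto

lemma word_weight_le_one: "(\<And>i. 0 \<le> r i) \<Longrightarrow> (\<And>i. r i \<le> 1) \<Longrightarrow> word_weight r x \<le> 1"
  unfolding word_weight_def by (intro prod_le_1) auto

text \<open>Unlike \<^const>\<open>cut_set\<close>, this set contains the root when \<open>\<sigma> \<ge> 1\<close>, so that the
  recursion \<open>Cons_mem_stopping_set_iff\<close> holds for every \<open>\<sigma>\<close>.\<close>
definition stopping_set :: "('a \<Rightarrow> real) \<Rightarrow> real \<Rightarrow> 'a list set" where
  "stopping_set r \<sigma> = {i. word_weight r i \<le> \<sigma> \<and> (\<forall>k<length i. \<sigma> < word_weight r (take k i))}"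

lemma Nil_mem_stopping_set_iff: "[] \<in> stopping_set r \<sigma> \<longleftrightarrow> 1 \<le> \<sigma>"
  by (simp add: stopping_set_def)

lemma Cons_mem_stopping_set_iff:
  assumes "0 < r j"
  shows "j # b \<in> stopping_set r \<sigma> \<longleftrightarrow> \<sigma> < 1 \<and> b \<in> stopping_set r (\<sigma> / r j)"
  using assms
  by (auto simp: stopping_set_def word_weight_Cons All_less_Suc2 pos_le_divide_eq pos_divide_less_eq
      mult.commute)

lemma stopping_set_rec:
  assumes "\<And>j. 0 < r j"
  shows "stopping_set r \<sigma> = (if 1 \<le> \<sigma> then {[]} else (\<Union>j. Cons j ` stopping_set r (\<sigma> / r j)))"
proof (rule set_eqI)
  fix x
  show "x \<in> stopping_set r \<sigma> \<longleftrightarrow> x \<in> (if 1 \<le> \<sigma> then {[]} else (\<Union>j. Cons j ` stopping_set r (\<sigma> / r j)))"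
    using assms by (cases x) (auto simp: Nil_mem_stopping_set_iff Cons_mem_stopping_set_iff)
qed

lemma stopping_set_eq_cut_set:
  assumes r: "\<And>i. 0 < r i" "\<And>i. r i \<le> 1" and "\<sigma> < 1"
  shows "stopping_set r \<sigma> = cut_set r \<sigma>"
proof (rule set_eqI)
  fix x
  have prefix_weight: "word_weight r (butlast x) \<le> word_weight r (take k x)" if "k < length x" for k
  proof -
    have "butlast x = take k x @ drop k (butlast x)"
      using that by (metis append_take_drop_id take_butlast)
    then have "word_weight r (butlast x) = word_weight r (take k x) * word_weight r (drop k (butlast x))"
      by (metis word_weight_append)
    moreover have "0 < word_weight r (take k x)" "word_weight r (drop k (butlast x)) \<le> 1"
      using r by (auto intro: word_weight_pos word_weight_le_one less_imp_le)
    ultimately show ?thesis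
      by (simp add: mult_le_cancel_left1)
  qed
  have "x \<noteq> []" if "word_weight r x \<le> \<sigma>"
    using that \<open>\<sigma> < 1\<close> by auto
  then show "x \<in> stopping_set r \<sigma> \<longleftrightarrow> x \<in> cut_set r \<sigma>"
    unfolding stopping_set_def cut_set_def
    by (auto simp: butlast_conv_take intro: less_le_trans[OF _ prefix_weight])
qed

definition subtrees_space :: "'a set pmf \<Rightarrow> ('a \<Rightarrow> 'a list \<Rightarrow> 'a set) measure" where
  "subtrees_space W = PiM UNIV (\<lambda>_. gw_space W)"

definition join_env :: "'a set \<times> ('a \<Rightarrow> 'a list \<Rightarrow> 'a set) \<Rightarrow> 'a list \<Rightarrow> 'a set" where
  "join_env = (\<lambda>(S, ws) i. case i of [] \<Rightarrow> S | j # b \<Rightarrow> ws j b)"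

lemma join_env_Nil [simp]: "join_env (S, ws) [] = S"
  by (simp add: join_env_def)

lemma subtree_join_env [simp]: "subtree j (join_env (S, ws)) = ws j"
  by (simp add: join_env_def subtree_def)

lemma space_gw_space [simp]: "space (gw_space W) = UNIV"
  by (simp add: gw_space_def space_PiM PiE_UNIV_domain)

lemma prob_space_gw_space: "prob_space (gw_space W)"
  unfolding gw_space_def by (rule prob_space_PiM) (simp add: prob_space_measure_pmf)

lemma space_subtrees_space [simp]: "space (subtrees_space W) = UNIV"
  by (simp add: subtrees_space_def space_PiM PiE_UNIV_domain)

lemma prob_space_subtrees_space: "prob_space (subtrees_space W)"
  unfolding subtrees_space_def by (rule prob_space_PiM) (simp add: prob_space_gw_space)

lemma measurable_gw_space_component: "(\<lambda>\<omega>. \<omega> i) \<in> measurable (gw_space W) (measure_pmf W)"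
  unfolding gw_space_def by (rule measurable_component_singleton) simp

lemma measurable_subtrees_space_component: "(\<lambda>ws. ws j) \<in> measurable (subtrees_space W) (gw_space W)"
  unfolding subtrees_space_def by (rule measurable_component_singleton) simp

lemma measurable_into_gw_space:
  "(\<And>i. (\<lambda>x. f x i) \<in> measurable N (measure_pmf W)) \<Longrightarrow> f \<in> measurable N (gw_space W)"
  unfolding gw_space_def by (rule measurable_PiM_single') auto

lemma measurable_subtree: "subtree j \<in> measurable (gw_space W) (gw_space W)"
  unfolding subtree_def by (intro measurable_into_gw_space measurable_gw_space_component)

lemma measurable_subtrees: "(\<lambda>\<omega> j. subtree j \<omega>) \<in> measurable (gw_space W) (subtrees_space W)"
  unfolding subtrees_space_def by (rule measurable_PiM_single') (auto intro: measurable_subtree)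

lemma measurable_join_env:
  "join_env \<in> measurable (measure_pmf W \<Otimes>\<^sub>M subtrees_space W) (gw_space W)"
proof (rule measurable_into_gw_space)
  fix i :: "'a list"
  show "(\<lambda>x. join_env x i) \<in> measurable (measure_pmf W \<Otimes>\<^sub>M subtrees_space W) (measure_pmf W)"
  proof (cases i)
    case Nil
    then show ?thesis by (simp add: join_env_def case_prod_beta)
  next
    case (Cons j b)
    have "(\<lambda>x. snd x j b) \<in> measurable (measure_pmf W \<Otimes>\<^sub>M subtrees_space W) (measure_pmf W)"
      by (intro measurable_compose[OF measurable_snd] measurable_compose[OF
            measurable_subtrees_space_component measurable_gw_space_component])
    then show ?thesis using Cons by (simp add: join_env_def case_prod_beta)
  qed
qed

lemma prod_Cons_vimage:
  fixes f :: "'a::finite list \<Rightarrow> 'b::comm_monoid_mult"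
  assumes "finite J"
  shows "(\<Prod>j\<in>UNIV. \<Prod>b\<in>Cons j -` J. f (j # b)) = (\<Prod>i\<in>J - {[]}. f i)"
proof -
  have "(\<Prod>j\<in>UNIV. \<Prod>b\<in>Cons j -` J. f (j # b)) = (\<Prod>(j, b)\<in>(SIGMA j:UNIV. Cons j -` J). f (j # b))"
    using assms by (intro prod.Sigma) (auto intro: finite_vimageI)
  also have "\<dots> = (\<Prod>i\<in>J - {[]}. f i)"
    by (rule prod.reindex_bij_witness[where i = "\<lambda>i. (hd i, tl i)" and j = "\<lambda>(j, b). j # b"])
      (auto simp: neq_Nil_conv)
  finally show ?thesis .
qed

lemma emeasure_subtrees_space_PiE:
  fixes W :: "'a::finite set pmf"
  assumes "\<And>j. Y j \<in> sets (gw_space W)"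
  shows "emeasure (subtrees_space W) (PiE UNIV Y) = (\<Prod>j\<in>UNIV. emeasure (gw_space W) (Y j))"
proof -
  have "prod_emb UNIV (\<lambda>_. gw_space W) UNIV (PiE UNIV Y) = PiE UNIV Y"
    by (auto simp: prod_emb_def PiE_UNIV_domain)
  then show ?thesis
    using emeasure_PiM_emb[of UNIV "\<lambda>_. gw_space W" UNIV Y] assms
    by (simp add: subtrees_space_def prob_space_gw_space)
qed

lemma distr_join_env:
  fixes W :: "'a::finite set pmf"
  shows "distr (measure_pmf W \<Otimes>\<^sub>M subtrees_space W) (gw_space W) join_env = gw_space W"
  (is "distr ?B _ _ = _")
proof -
  interpret P: product_prob_space "\<lambda>_::'a list. measure_pmf W" UNIV
    by (rule product_prob_spaceI) (simp add: prob_space_measure_pmf)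
  interpret Q: prob_space "subtrees_space W"
    by (rule prob_space_subtrees_space)
  show ?thesis
    unfolding gw_space_def
  proof (rule P.PiM_eq)
    fix J :: "'a list set" and E assume J: "finite J" "J \<subseteq> UNIV" "\<And>i. i \<in> J \<Longrightarrow> E i \<in> sets (measure_pmf W)"
    let ?X = "prod_emb UNIV (\<lambda>_. measure_pmf W) J (PiE J E)"
    define E0 where "E0 = (if [] \<in> J then E [] else UNIV)"
    define Y where "Y j = prod_emb UNIV (\<lambda>_. measure_pmf W) (Cons j -` J) (\<Pi>\<^sub>E b\<in>Cons j -` J. E (j # b))"
      for j
    have fin: "finite (Cons j -` J)" for j
      using J by (intro finite_vimageI) auto
    have Y: "Y j \<in> sets (gw_space W)" for j
      unfolding Y_def gw_space_def using fin by (intro sets_PiM_I) auto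
    have "join_env -` ?X \<inter> space ?B = E0 \<times> PiE UNIV Y"
      by (auto simp: join_env_def prod_emb_def Y_def E0_def space_pair_measure PiE_iff
          split: list.splits)
    then have "emeasure (distr ?B (gw_space W) join_env) ?X = emeasure ?B (E0 \<times> PiE UNIV Y)"
      using J by (subst emeasure_distr[OF measurable_join_env]) (auto intro!: sets_PiM_I simp: gw_space_def)
    also have "\<dots> = emeasure (measure_pmf W) E0 * emeasure (subtrees_space W) (PiE UNIV Y)"
      using Y by (intro Q.emeasure_pair_measure_Times)
        (auto simp: subtrees_space_def intro!: sets_PiM_I_finite)
    also have "emeasure (subtrees_space W) (PiE UNIV Y) = (\<Prod>j\<in>UNIV. emeasure (gw_space W) (Y j))"
      using Y by (rule emeasure_subtrees_space_PiE)
    also have "\<dots> = (\<Prod>j\<in>UNIV. \<Prod>b\<in>Cons j -` J. emeasure (measure_pmf W) (E (j # b)))"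
      unfolding Y_def gw_space_def
      using fin by (intro prod.cong emeasure_PiM_emb) (auto simp: prob_space_measure_pmf)
    also have "\<dots> = (\<Prod>i\<in>J - {[]}. emeasure (measure_pmf W) (E i))"
      using J(1) by (rule prod_Cons_vimage)
    also have "emeasure (measure_pmf W) E0 * \<dots> = (\<Prod>i\<in>J. emeasure (measure_pmf W) (E i))"
      using J by (auto simp: E0_def prod.remove measure_pmf.emeasure_space_1[simplified])
    finally show "emeasure (distr ?B (Pi\<^sub>M UNIV (\<lambda>_. measure_pmf W)) join_env) ?X
        = (\<Prod>i\<in>J. emeasure (measure_pmf W) (E i))"
      by (simp add: gw_space_def)
  qed simp
qed

lemma measurable_root_subtrees:
  fixes W :: "'a::finite set pmf"
  assumes "\<And>S. G S \<in> measurable (subtrees_space W) N"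
  shows "(\<lambda>\<omega>. G (\<omega> []) (\<lambda>j. subtree j \<omega>)) \<in> measurable (gw_space W) N"
proof (rule measurable_compose_countable[where f = "\<lambda>S \<omega>. G S (\<lambda>j. subtree j \<omega>)"])
  show "(\<lambda>\<omega>. G S (\<lambda>j. subtree j \<omega>)) \<in> measurable (gw_space W) N" for S
    using measurable_subtrees assms by (rule measurable_compose)
  show "(\<lambda>\<omega>. \<omega> []) \<in> measurable (gw_space W) (count_space UNIV)"
    using measurable_gw_space_component by simp
qed

lemma nn_integral_root_subtrees:
  fixes W :: "'a::finite set pmf"
  assumes G: "\<And>S. G S \<in> borel_measurable (subtrees_space W)"
  shows "(\<integral>\<^sup>+\<omega>. G (\<omega> []) (\<lambda>j. subtree j \<omega>) \<partial>gw_space W)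
       = (\<Sum>S\<in>UNIV. ennreal (pmf W S) * (\<integral>\<^sup>+ws. G S ws \<partial>subtrees_space W))"
proof -
  interpret Q: prob_space "subtrees_space W"
    by (rule prob_space_subtrees_space)
  have G': "(\<lambda>x. G (fst x) (snd x)) \<in> borel_measurable (measure_pmf W \<Otimes>\<^sub>M subtrees_space W)"
    by (rule measurable_compose_countable[where f = "\<lambda>S x. G S (snd x)"])
      (auto intro: measurable_compose[OF measurable_snd G] measurable_compose[OF measurable_fst])
  have "(\<integral>\<^sup>+\<omega>. G (\<omega> []) (\<lambda>j. subtree j \<omega>) \<partial>gw_space W)
      = (\<integral>\<^sup>+x. G (join_env x []) (\<lambda>j. subtree j (join_env x)) \<partial>(measure_pmf W \<Otimes>\<^sub>M subtrees_space W))"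
    by (subst (1) distr_join_env[symmetric], rule nn_integral_distr)
      (auto intro: measurable_join_env measurable_root_subtrees G)
  also have "\<dots> = (\<integral>\<^sup>+x. G (fst x) (snd x) \<partial>(measure_pmf W \<Otimes>\<^sub>M subtrees_space W))"
    by (intro nn_integral_cong) (auto simp: case_prod_beta split: prod.splits)
  also have "\<dots> = (\<integral>\<^sup>+S. \<integral>\<^sup>+ws. G S ws \<partial>subtrees_space W \<partial>measure_pmf W)"
    using Q.nn_integral_fst[OF G'] by simp
  also have "\<dots> = (\<Sum>S\<in>UNIV. ennreal (pmf W S) * (\<integral>\<^sup>+ws. G S ws \<partial>subtrees_space W))"
    by (simp add: nn_integral_measure_pmf nn_integral_count_space_finite mult.commute)
  finally show ?thesis .
qed

lemma nn_integral_subtrees_space_prod: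
  fixes W :: "'a::finite set pmf"
  assumes h: "\<And>j. j \<in> S \<Longrightarrow> h j \<in> borel_measurable (gw_space W)"
  shows "(\<integral>\<^sup>+ws. (\<Prod>j\<in>S. h j (ws j)) \<partial>subtrees_space W) = (\<Prod>j\<in>S. \<integral>\<^sup>+\<omega>. h j \<omega> \<partial>gw_space W)"
proof -
  interpret P: product_prob_space "\<lambda>_::'a. gw_space W" UNIV
    by (rule product_prob_spaceI) (simp add: prob_space_gw_space)
  have meas: "(\<lambda>ws. \<Prod>j\<in>S. h j (ws j)) \<in> borel_measurable (PiM S (\<lambda>_. gw_space W))"
    using h by (intro borel_measurable_prod_ennreal measurable_compose[OF measurable_component_singleton])
  have "(\<integral>\<^sup>+ws. (\<Prod>j\<in>S. h j (ws j)) \<partial>subtrees_space W)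
      = (\<integral>\<^sup>+ws. (\<Prod>j\<in>S. h j (ws j)) \<partial>distr (subtrees_space W) (PiM S (\<lambda>_. gw_space W)) (\<lambda>x. restrict x S))"
    using meas unfolding subtrees_space_def by (subst nn_integral_distr) auto
  also have "\<dots> = (\<integral>\<^sup>+ws. (\<Prod>j\<in>S. h j (ws j)) \<partial>PiM S (\<lambda>_. gw_space W))"
    unfolding subtrees_space_def by (subst P.distr_PiM_restrict_finite) auto
  also have "\<dots> = (\<Prod>j\<in>S. \<integral>\<^sup>+\<omega>. h j \<omega> \<partial>gw_space W)"
    using h by (intro P.product_nn_integral_prod) auto
  finally show ?thesis .
qed

lemma nn_integral_subtrees_space_component:
  fixes W :: "'a::finite set pmf"
  assumes "h \<in> borel_measurable (gw_space W)"
  shows "(\<integral>\<^sup>+ws. h (ws j) \<partial>subtrees_space W) = (\<integral>\<^sup>+\<omega>. h \<omega> \<partial>gw_space W)"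
  using nn_integral_subtrees_space_prod[of "{j}" "\<lambda>_. h"] assms by simp

lemma nn_integral_subtrees_space_pair:
  fixes W :: "'a::finite set pmf"
  assumes "f \<in> borel_measurable (gw_space W)" "g \<in> borel_measurable (gw_space W)" "i \<noteq> j"
  shows "(\<integral>\<^sup>+ws. f (ws i) * g (ws j) \<partial>subtrees_space W)
       = (\<integral>\<^sup>+\<omega>. f \<omega> \<partial>gw_space W) * (\<integral>\<^sup>+\<omega>. g \<omega> \<partial>gw_space W)"
  using nn_integral_subtrees_space_prod[of "{i, j}" "\<lambda>l. if l = i then f else g"] assms by simp

lemma sets_all_subtrees:
  fixes W :: "'a::finite set pmf"
  assumes "\<And>j. E j \<in> sets (gw_space W)"
  shows "{\<omega>. \<forall>j\<in>\<omega> []. subtree j \<omega> \<in> E j} \<in> sets (gw_space W)"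
proof -
  have "Measurable.pred (gw_space W) (\<lambda>\<omega>. \<forall>j\<in>\<omega> []. subtree j \<omega> \<in> E j)"
    using assms
    by (intro measurable_root_subtrees[where G = "\<lambda>S ws. \<forall>j\<in>S. ws j \<in> E j"] pred_intros_finite
        pred_sets2[OF _ measurable_subtrees_space_component]) auto
  then show ?thesis
    by (simp add: pred_def)
qed

lemma measure_all_subtrees:
  fixes W :: "'a::finite set pmf"
  assumes E: "\<And>j. E j \<in> sets (gw_space W)"
  shows "measure (gw_space W) {\<omega>. \<forall>j\<in>\<omega> []. subtree j \<omega> \<in> E j}
       = (\<Sum>S\<in>UNIV. pmf W S * (\<Prod>j\<in>S. measure (gw_space W) (E j)))"
proof -
  interpret prob_space "gw_space W"
    by (rule prob_space_gw_space)
  define G where "G S ws = (\<Prod>j\<in>S. indicator (E j) (ws j) :: ennreal)" for S ws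
  have G: "G S \<in> borel_measurable (subtrees_space W)" for S
    unfolding G_def using E
    by (intro borel_measurable_prod_ennreal borel_measurable_indicator
        measurable_compose[OF measurable_subtrees_space_component]) auto
  have "indicator {\<omega>. \<forall>j\<in>\<omega> []. subtree j \<omega> \<in> E j} \<omega> = G (\<omega> []) (\<lambda>j. subtree j \<omega>)" for \<omega>
    by (simp add: G_def indicator_def prod_zero)
  then have "emeasure (gw_space W) {\<omega>. \<forall>j\<in>\<omega> []. subtree j \<omega> \<in> E j}
      = (\<integral>\<^sup>+\<omega>. G (\<omega> []) (\<lambda>j. subtree j \<omega>) \<partial>gw_space W)"
    using sets_all_subtrees[OF E] by (simp flip: nn_integral_indicator)
  also have "\<dots> = (\<Sum>S\<in>UNIV. ennreal (pmf W S) * (\<integral>\<^sup>+ws. G S ws \<partial>subtrees_space W))"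
    by (rule nn_integral_root_subtrees[OF G])
  also have "\<dots> = (\<Sum>S\<in>UNIV. ennreal (pmf W S) * (\<Prod>j\<in>S. emeasure (gw_space W) (E j)))"
  proof (intro sum.cong refl arg_cong2[where f = "(*)"])
    show "(\<integral>\<^sup>+ws. G S ws \<partial>subtrees_space W) = (\<Prod>j\<in>S. emeasure (gw_space W) (E j))" for S
      unfolding G_def using E by (subst nn_integral_subtrees_space_prod) auto
  qed
  also have "\<dots> = ennreal (\<Sum>S\<in>UNIV. pmf W S * (\<Prod>j\<in>S. measure (gw_space W) (E j)))"
    by (simp add: emeasure_eq_measure prod_ennreal ennreal_mult[symmetric] prod_nonneg)
  finally show ?thesis
    by (simp add: emeasure_eq_measure sum_nonneg prod_nonneg)
qed

lemma le_half_square_indicator: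
  fixes x m l :: real
  assumes "0 < l" "0 < m"
  shows "x \<le> m / 2 + l / 2 * x\<^sup>2 + 1 / (2 * l) * (if m / 2 < x then 1 else 0)"
proof (cases "m / 2 < x")
  case True
  have "0 \<le> (l * x - 1)\<^sup>2 / (2 * l)"
    using assms by simp
  then have "x \<le> l / 2 * x\<^sup>2 + 1 / (2 * l)"
    using assms by (simp add: field_simps power2_eq_square)
  then show ?thesis
    using True assms by simp
next
  case False
  moreover have "0 \<le> l / 2 * x\<^sup>2"
    using assms by simp
  ultimately show ?thesis
    by simp
qed

lemma (in prob_space) paley_zygmund_half:
  fixes X :: "'a \<Rightarrow> real"
  assumes X: "X \<in> borel_measurable M"
    and m: "0 < m" "ennreal m \<le> (\<integral>\<^sup>+x. X x \<partial>M)"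
    and D: "0 < D" "(\<integral>\<^sup>+x. (X x)\<^sup>2 \<partial>M) \<le> ennreal (D * m\<^sup>2)"
  shows "1 / (4 * D) \<le> prob {x \<in> space M. m / 2 < X x}"
proof -
  define A where "A = {x \<in> space M. m / 2 < X x}"
  \<comment> \<open>After integrating \<open>le_half_square_indicator\<close>, this \<open>l\<close> balances its last two terms.\<close>
  define l where "l = 1 / (2 * D * m)"
  have l: "0 < l"
    unfolding l_def using m D by simp
  have A: "A \<in> events"
    unfolding A_def using X by measurable
  have pointwise: "ennreal (X x) \<le> ennreal (m / 2) + ennreal (l / 2) * ennreal ((X x)\<^sup>2)
      + ennreal (1 / (2 * l)) * indicator A x" if "x \<in> space M" for x
    using le_half_square_indicator[OF l m(1), of "X x"] that l m
    by (auto simp: A_def ennreal_plus[symmetric] ennreal_mult[symmetric] ennreal_leI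
        simp del: ennreal_plus split: split_indicator)
  have "ennreal m \<le> (\<integral>\<^sup>+x. ennreal (m / 2) + ennreal (l / 2) * ennreal ((X x)\<^sup>2)
      + ennreal (1 / (2 * l)) * indicator A x \<partial>M)"
    using m(2) pointwise by (auto intro: order_trans[OF _ nn_integral_mono])
  also have "\<dots> = ennreal (m / 2) + ennreal (l / 2) * (\<integral>\<^sup>+x. (X x)\<^sup>2 \<partial>M)
      + ennreal (1 / (2 * l)) * emeasure M A"
    using X A by (simp add: nn_integral_add nn_integral_cmult emeasure_space_1)
  also have "\<dots> \<le> ennreal (m / 2) + ennreal (l / 2) * ennreal (D * m\<^sup>2) + ennreal (1 / (2 * l)) * prob A"
    using D(2) by (intro add_mono mult_left_mono order_refl) (auto simp: emeasure_eq_measure)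
  also have "\<dots> = ennreal (m / 2 + l / 2 * (D * m\<^sup>2) + 1 / (2 * l) * prob A)"
    using l m D by (simp add: ennreal_plus[symmetric] ennreal_mult[symmetric] del: ennreal_plus)
  finally have "m \<le> m / 2 + l / 2 * (D * m\<^sup>2) + 1 / (2 * l) * prob A"
    using l m D by (subst (asm) ennreal_le_iff) (auto intro!: add_nonneg_nonneg)
  then have "m / 4 \<le> D * m * prob A"
    using l m D by (simp add: l_def field_simps power2_eq_square)
  then show ?thesis
    using m D by (simp add: A_def field_simps)
qed

lemma sum_diagonal_plus_products:
  fixes a b :: "'b \<Rightarrow> 'c::comm_semiring_1"
  assumes "finite S"
  shows "(\<Sum>i\<in>S. \<Sum>j\<in>S. (if i = j then b i else 0) + a i * a j) = (\<Sum>j\<in>S. b j) + (\<Sum>j\<in>S. a j)\<^sup>2"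
proof -
  have "(\<Sum>i\<in>S. \<Sum>j\<in>S. if i = j then b i else 0) = (\<Sum>i\<in>S. b i)"
    using assms by (intro sum.cong refl) (simp add: sum.delta)
  then show ?thesis
    by (simp add: sum.distrib power2_eq_square sum_product)
qed

locale supercritical_pgf =
  fixes p :: "'s::finite \<Rightarrow> real" and k :: "'s \<Rightarrow> nat"
  assumes p_nonneg: "\<And>S. 0 \<le> p S"
    and p_sum: "(\<Sum>S\<in>UNIV. p S) = 1"
    and mean_gt_1: "(\<Sum>S\<in>UNIV. p S * real (k S)) > 1"
begin

definition F :: "real \<Rightarrow> real" where
  "F t = (\<Sum>S\<in>UNIV. p S * t ^ k S)"

text \<open>\<open>H t = (F t - t) / (1 - t)\<close>, written as a polynomial.\<close>
definition H :: "real \<Rightarrow> real" where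
  "H t = 1 - (\<Sum>S\<in>UNIV. p S * (\<Sum>i<k S. t ^ i))"

lemma F_minus_id: "F t - t = (1 - t) * H t"
proof -
  have "F t = (\<Sum>S\<in>UNIV. p S * (1 - (1 - t) * (\<Sum>i<k S. t ^ i)))"
    unfolding F_def by (intro sum.cong) (auto simp: one_diff_power_eq[symmetric])
  also have "\<dots> = (\<Sum>S\<in>UNIV. p S) - (1 - t) * (\<Sum>S\<in>UNIV. p S * (\<Sum>i<k S. t ^ i))"
    by (simp add: right_diff_distrib sum_subtractf sum_distrib_left mult.left_commute)
  finally show ?thesis
    by (simp add: H_def p_sum algebra_simps)
qed

lemma F_mono: "0 \<le> s \<Longrightarrow> s \<le> t \<Longrightarrow> F s \<le> F t"
  unfolding F_def using p_nonneg by (intro sum_mono mult_left_mono power_mono) auto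

lemma isCont_F: "isCont F t"
  unfolding F_def by (intro continuous_intros)

lemma ex_branching: "\<exists>S. 0 < p S \<and> 2 \<le> k S"
proof (rule ccontr)
  assume no_branching: "\<nexists>S. 0 < p S \<and> 2 \<le> k S"
  then have "p S * real (k S) \<le> p S" for S
  proof (cases "0 < p S")
    case True
    with no_branching have "k S \<le> 1"
      by fastforce
    with True show ?thesis
      by simp
  qed (use p_nonneg[of S] in simp)
  then have "(\<Sum>S\<in>UNIV. p S * real (k S)) \<le> (\<Sum>S\<in>UNIV. p S)"
    by (intro sum_mono)
  then show False
    using mean_gt_1 p_sum by simp
qed

lemma H_strict_antimono:
  assumes "0 \<le> s" "s < t"
  shows "H t < H s"
proof -
  obtain S0 where S0: "0 < p S0" "2 \<le> k S0"
    using ex_branching by blast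
  have le: "(\<Sum>i<k S. s ^ i) \<le> (\<Sum>i<k S. t ^ i)" for S
    using assms by (intro sum_mono power_mono) auto
  have "(\<Sum>i<k S0. s ^ i) < (\<Sum>i<k S0. t ^ i)"
    using assms S0 by (intro sum_strict_mono_ex1) (auto intro!: power_mono bexI[of _ 1])
  then have "p S0 * (\<Sum>i<k S0. s ^ i) < p S0 * (\<Sum>i<k S0. t ^ i)"
    using S0 by simp
  then have "(\<Sum>S\<in>UNIV. p S * (\<Sum>i<k S. s ^ i)) < (\<Sum>S\<in>UNIV. p S * (\<Sum>i<k S. t ^ i))"
    using le p_nonneg by (intro sum_strict_mono_ex1) (auto intro: mult_left_mono)
  then show ?thesis
    by (simp add: H_def)
qed

text \<open>The extinction probability: the fixed point of \<^const>\<open>F\<close> below 1.\<close>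
definition q :: real where
  "q = (SOME t. 0 \<le> t \<and> t < 1 \<and> H t = 0)"

lemma q: "0 \<le> q" "q < 1" "H q = 0"
proof -
  have "H 1 < 0"
    using mean_gt_1 by (simp add: H_def)
  moreover have "0 \<le> H 0"
  proof -
    have "0 \<le> F 0"
      unfolding F_def using p_nonneg by (intro sum_nonneg) simp
    then show ?thesis
      using F_minus_id[of 0] by simp
  qed
  moreover have "continuous_on {0..1} H"
    unfolding H_def by (intro continuous_intros)
  ultimately obtain t where t: "0 \<le> t" "t \<le> 1" "H t = 0"
    using IVT2'[of H 1 0 0] by auto
  with \<open>H 1 < 0\<close> have "\<exists>t. 0 \<le> t \<and> t < 1 \<and> H t = 0"
    by (intro exI[of _ t]) (auto simp: order_le_less)
  then have "0 \<le> q \<and> q < 1 \<and> H q = 0"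
    unfolding q_def by (rule someI_ex)
  then show "0 \<le> q" "q < 1" "H q = 0"
    by auto
qed

lemma F_q: "F q = q"
  using F_minus_id[of q] q by simp

lemma le_F_below_q:
  assumes "0 \<le> t" "t \<le> q"
  shows "t \<le> F t"
proof -
  have "0 \<le> H t"
    using H_strict_antimono[of t q] q assms by (cases "t = q") auto
  then have "0 \<le> (1 - t) * H t"
    using assms q by simp
  then show ?thesis
    using F_minus_id[of t] by simp
qed

lemma F_le_above_q:
  assumes "q \<le> t" "t < 1"
  shows "F t \<le> t"
proof -
  have "H t \<le> 0"
    using H_strict_antimono[of q t] q assms by (cases "t = q") auto
  then have "(1 - t) * H t \<le> 0"
    using assms by (simp add: mult_nonneg_nonpos)
  then show ?thesis
    using F_minus_id[of t] by simp
qed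

lemma fixpoint_eq_q: "0 \<le> t \<Longrightarrow> t < 1 \<Longrightarrow> F t = t \<Longrightarrow> t = q"
  using F_minus_id[of t] H_strict_antimono[of t q] H_strict_antimono[of q t] q
  by (cases t q rule: linorder_cases) auto

lemma limit_of_iterates_is_fixpoint:
  assumes "(\<lambda>n. (F ^^ n) s) \<longlonglongrightarrow> L"
  shows "F L = L"
proof -
  have "(\<lambda>n. F ((F ^^ n) s)) \<longlonglongrightarrow> F L"
    using isCont_F assms by (rule isCont_tendsto_compose)
  moreover have "(\<lambda>n. F ((F ^^ n) s)) \<longlonglongrightarrow> L"
    using LIMSEQ_Suc[OF assms] by simp
  ultimately show ?thesis
    using LIMSEQ_unique by blast
qed

lemma iterates_below_q:
  assumes "0 \<le> s" "s \<le> q"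
  shows "s \<le> (F ^^ n) s \<and> (F ^^ n) s \<le> (F ^^ Suc n) s \<and> (F ^^ Suc n) s \<le> q"
proof (induction n)
  case 0
  then show ?case
    using assms le_F_below_q[of s] F_mono[of s q] F_q by simp
next
  case (Suc n)
  then show ?case
    using assms F_mono[of "(F ^^ n) s" "(F ^^ Suc n) s"] F_mono[of "(F ^^ Suc n) s" q] F_q by simp
qed

lemma iterates_above_q:
  assumes "q \<le> s" "s < 1"
  shows "q \<le> (F ^^ Suc n) s \<and> (F ^^ Suc n) s \<le> (F ^^ n) s \<and> (F ^^ n) s \<le> s"
proof (induction n)
  case 0
  then show ?case
    using assms F_le_above_q[of s] F_mono[of q s] F_q q by simp
next
  case (Suc n)
  then show ?case
    using q F_mono[of "(F ^^ Suc n) s" "(F ^^ n) s"] F_mono[of q "(F ^^ Suc n) s"] F_q by simp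
qed

lemma iterates_tendsto_q:
  assumes s: "0 \<le> s" "s < 1"
  shows "(\<lambda>n. (F ^^ n) s) \<longlonglongrightarrow> q"
proof (cases "s \<le> q")
  case True
  note bounds = iterates_below_q[OF s(1) True]
  have below: "(F ^^ n) s \<le> q" for n
    using bounds[of n] by linarith
  have "incseq (\<lambda>n. (F ^^ n) s)"
    using bounds by (intro incseq_SucI) blast
  then obtain L where L: "(\<lambda>n. (F ^^ n) s) \<longlonglongrightarrow> L"
    using below incseq_convergent[of _ q] by metis
  have "s \<le> L" "L \<le> q"
    using bounds below by (auto intro!: LIMSEQ_le_const[OF L] LIMSEQ_le_const2[OF L])
  then show ?thesis
    using L limit_of_iterates_is_fixpoint[OF L] fixpoint_eq_q[of L] s q by simp
next
  case False
  then have bounds: "q \<le> (F ^^ Suc n) s \<and> (F ^^ Suc n) s \<le> (F ^^ n) s \<and> (F ^^ n) s \<le> s" for n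
    using iterates_above_q s by simp
  have above: "q \<le> (F ^^ n) s" for n
    using bounds[of n] by linarith
  have "decseq (\<lambda>n. (F ^^ n) s)"
    using bounds by (intro decseq_SucI) blast
  then obtain L where L: "(\<lambda>n. (F ^^ n) s) \<longlonglongrightarrow> L"
    using above decseq_convergent[of _ q] by metis
  have "q \<le> L" "L \<le> s"
    using bounds above by (auto intro!: LIMSEQ_le_const[OF L] LIMSEQ_le_const2[OF L])
  then show ?thesis
    using L limit_of_iterates_is_fixpoint[OF L] fixpoint_eq_q[of L] s q by simp
qed

end

locale gw_weights =
  fixes W :: "'a::finite set pmf" and r :: "'a \<Rightarrow> real" and \<delta> :: real
  assumes r_pos: "\<And>i. 0 < r i" and r_less_1: "\<And>i. r i < 1"
    and mean_offspring: "(\<Sum>S\<in>UNIV. pmf W S * real (card S)) > 1"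
    and malthusian: "(\<Sum>S\<in>UNIV. pmf W S * (\<Sum>i\<in>S. r i powr \<delta>)) = 1"
begin

sublocale supercritical_pgf "pmf W" card
  by unfold_locales (simp_all add: sum_pmf_eq_1 mean_offspring)

abbreviation P :: "('a list \<Rightarrow> 'a set) measure" where
  "P \<equiv> gw_space W"

definition rmin :: real where
  "rmin = Min (range r)"

definition rmax :: real where
  "rmax = Max (range r)"

lemma rmin: "0 < rmin" "rmin \<le> r j"
  using Min_in[of "range r"] r_pos by (auto simp: rmin_def)

lemma rmin_less_1: "rmin < 1"
  using rmin(2) r_less_1 by (rule order_le_less_trans)

lemma rmax: "rmax < 1" "r j \<le> rmax"
  using Max_in[of "range r"] r_less_1 by (auto simp: rmax_def)

lemma delta_pos: "0 < \<delta>"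
proof (rule ccontr)
  assume "\<not> 0 < \<delta>"
  then have "1 \<le> r i powr \<delta>" for i
    using r_pos[of i] r_less_1[of i] by (simp add: powr_def mult_nonpos_nonpos)
  then have "real (card S) \<le> (\<Sum>i\<in>S. r i powr \<delta>)" for S :: "'a set"
    using sum_mono[of S "\<lambda>_. 1" "\<lambda>i. r i powr \<delta>"] by simp
  then have "(\<Sum>S\<in>UNIV. pmf W S * real (card S)) \<le> (\<Sum>S\<in>UNIV. pmf W S * (\<Sum>i\<in>S. r i powr \<delta>))"
    by (intro sum_mono mult_left_mono) auto
  then show False
    using mean_offspring malthusian by simp
qed

lemma r_powr_delta: "0 < r j powr \<delta>" "r j powr \<delta> < 1"
  using r_pos[of j] r_less_1[of j] delta_pos powr_less_mono2[of \<delta> "r j" 1] by auto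

lemma divide_r_pos: "0 < \<sigma> \<Longrightarrow> 0 < \<sigma> / r j"
  using r_pos[of j] by simp

lemma powr_delta_divide: "0 < \<sigma> \<Longrightarrow> (\<sigma> / r j) powr (- \<delta>) = \<sigma> powr (- \<delta>) * r j powr \<delta>"
  using r_pos[of j] by (simp add: powr_divide powr_minus_divide)

text \<open>Well-founded because each \<open>\<sigma> / r j\<close> exceeds \<open>\<sigma>\<close> by at least the factor \<open>1 / rmax > 1\<close>.\<close>
lemma scale_induct [consumes 1, case_names large small]:
  assumes "0 < \<sigma>"
    and large: "\<And>\<sigma>. 1 \<le> \<sigma> \<Longrightarrow> Q \<sigma>"
    and small: "\<And>\<sigma>. 0 < \<sigma> \<Longrightarrow> \<sigma> < 1 \<Longrightarrow> (\<And>j. Q (\<sigma> / r j)) \<Longrightarrow> Q \<sigma>"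
  shows "Q \<sigma>"
proof -
  have rmax_pos: "0 < rmax"
    using r_pos rmax(2) by (rule less_le_trans)
  have "Q \<sigma>" if "rmax ^ n \<le> \<sigma>" for n \<sigma>
    using that
  proof (induction n arbitrary: \<sigma>)
    case 0
    then show ?case by (simp add: large)
  next
    case (Suc n)
    have pos: "0 < \<sigma>"
      using Suc.prems rmax_pos by (metis less_le_trans zero_less_power)
    show ?case
    proof (cases "1 \<le> \<sigma>")
      case False
      have "rmax ^ n \<le> \<sigma> / r j" for j
      proof -
        have "rmax ^ n \<le> \<sigma> / rmax"
          using Suc.prems rmax_pos by (simp add: field_simps)
        also have "\<dots> \<le> \<sigma> / r j"
          using pos r_pos[of j] rmax(2)[of j] by (intro divide_left_mono) auto
        finally show ?thesis .
      qed
      with pos False show ?thesis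
        by (rule_tac small) (auto intro: Suc.IH)
    qed (rule large)
  qed
  moreover obtain n where "rmax ^ n < \<sigma>"
    using real_arch_pow_inv[OF \<open>0 < \<sigma>\<close> rmax(1)] by blast
  ultimately show ?thesis
    using less_imp_le by blast
qed

lemma finite_stopping_set: "0 < \<sigma> \<Longrightarrow> finite (stopping_set r \<sigma>)"
proof (induction rule: scale_induct)
  case (small \<sigma>)
  then show ?case
    by (subst stopping_set_rec) (auto intro: r_pos)
qed (subst stopping_set_rec, auto intro: r_pos)

definition cut_count :: "real \<Rightarrow> ('a list \<Rightarrow> 'a set) \<Rightarrow> real" where
  "cut_count \<sigma> \<omega> = real (card (gw_tree \<omega> \<inter> stopping_set r \<sigma>))"

lemma cut_count_large: "1 \<le> \<sigma> \<Longrightarrow> cut_count \<sigma> \<omega> = 1"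
  by (subst cut_count_def, subst stopping_set_rec) (auto intro: r_pos simp: mem_gw_tree_iff)

lemma cut_count_small:
  assumes "0 < \<sigma>" "\<sigma> < 1"
  shows "cut_count \<sigma> \<omega> = (\<Sum>j\<in>\<omega> []. cut_count (\<sigma> / r j) (subtree j \<omega>))"
proof -
  define A where "A j = gw_tree (subtree j \<omega>) \<inter> stopping_set r (\<sigma> / r j)" for j
  have split: "gw_tree \<omega> \<inter> stopping_set r \<sigma> = (\<Union>j\<in>\<omega> []. Cons j ` A j)"
    using assms r_pos
    by (subst stopping_set_rec) (auto simp: A_def mem_gw_tree_iff tree_word_Cons)
  have "finite (A j)" for j
    unfolding A_def using assms r_pos[of j] finite_stopping_set[of "\<sigma> / r j"] by simp
  then have "card (gw_tree \<omega> \<inter> stopping_set r \<sigma>) = (\<Sum>j\<in>\<omega> []. card (Cons j ` A j))"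
    unfolding split by (intro card_UN_disjoint) auto
  then show ?thesis
    by (simp add: cut_count_def A_def card_image)
qed

lemma cut_count_nonneg: "0 \<le> cut_count \<sigma> \<omega>"
  by (simp add: cut_count_def)

lemma borel_measurable_cut_count: "0 < \<sigma> \<Longrightarrow> cut_count \<sigma> \<in> borel_measurable P"
proof (induction rule: scale_induct)
  case (small \<sigma>)
  have "(\<lambda>\<omega>. \<Sum>j\<in>\<omega> []. cut_count (\<sigma> / r j) (subtree j \<omega>)) \<in> borel_measurable P"
    using small
    by (intro measurable_root_subtrees[where G = "\<lambda>S ws. \<Sum>j\<in>S. cut_count (\<sigma> / r j) (ws j)"]
        borel_measurable_sum measurable_compose[OF measurable_subtrees_space_component])
  moreover have "cut_count \<sigma> = (\<lambda>\<omega>. \<Sum>j\<in>\<omega> []. cut_count (\<sigma> / r j) (subtree j \<omega>))"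
    using small by (intro ext cut_count_small)
  ultimately show ?case
    by simp
qed (simp add: cut_count_large)

lemma borel_measurable_ennreal_cut_count:
  "0 < \<sigma> \<Longrightarrow> (\<lambda>\<omega>. ennreal (cut_count \<sigma> \<omega>)) \<in> borel_measurable P"
  by (rule measurable_compose[OF borel_measurable_cut_count measurable_ennreal])

definition first_moment :: "real \<Rightarrow> ennreal" where
  "first_moment \<sigma> = (\<integral>\<^sup>+\<omega>. cut_count \<sigma> \<omega> \<partial>P)"

definition second_moment :: "real \<Rightarrow> ennreal" where
  "second_moment \<sigma> = (\<integral>\<^sup>+\<omega>. (cut_count \<sigma> \<omega>)\<^sup>2 \<partial>P)"

lemma first_moment_large: "1 \<le> \<sigma> \<Longrightarrow> first_moment \<sigma> = 1"
  using prob_space.emeasure_space_1[OF prob_space_gw_space]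
  by (simp add: first_moment_def cut_count_large)

lemma second_moment_large: "1 \<le> \<sigma> \<Longrightarrow> second_moment \<sigma> = 1"
  using prob_space.emeasure_space_1[OF prob_space_gw_space]
  by (simp add: second_moment_def cut_count_large)

lemma first_moment_small:
  assumes "0 < \<sigma>" "\<sigma> < 1"
  shows "first_moment \<sigma> = (\<Sum>S\<in>UNIV. ennreal (pmf W S) * (\<Sum>j\<in>S. first_moment (\<sigma> / r j)))"
proof -
  define X where "X j \<omega> = ennreal (cut_count (\<sigma> / r j) \<omega>)" for j \<omega>
  have X: "X j \<in> borel_measurable P" for j
    unfolding X_def using assms by (intro borel_measurable_ennreal_cut_count divide_r_pos)
  have Xj: "(\<lambda>ws. X j (ws j)) \<in> borel_measurable (subtrees_space W)" for j
    using X by (rule measurable_compose[OF measurable_subtrees_space_component])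
  have "first_moment \<sigma> = (\<integral>\<^sup>+\<omega>. (\<Sum>j\<in>\<omega> []. X j (subtree j \<omega>)) \<partial>P)"
    using assms by (simp add: first_moment_def X_def cut_count_small cut_count_nonneg)
  also have "\<dots> = (\<Sum>S\<in>UNIV. ennreal (pmf W S) * (\<integral>\<^sup>+ws. (\<Sum>j\<in>S. X j (ws j)) \<partial>subtrees_space W))"
    using Xj by (intro nn_integral_root_subtrees borel_measurable_sum)
  also have "\<dots> = (\<Sum>S\<in>UNIV. ennreal (pmf W S) * (\<Sum>j\<in>S. first_moment (\<sigma> / r j)))"
  proof (intro sum.cong refl arg_cong2[where f = "(*)"])
    fix S :: "'a set"
    have "(\<integral>\<^sup>+ws. (\<Sum>j\<in>S. X j (ws j)) \<partial>subtrees_space W) = (\<Sum>j\<in>S. \<integral>\<^sup>+ws. X j (ws j) \<partial>subtrees_space W)"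
      using Xj by (rule nn_integral_sum)
    also have "\<dots> = (\<Sum>j\<in>S. first_moment (\<sigma> / r j))"
      unfolding first_moment_def X_def[symmetric] using X by (intro sum.cong refl nn_integral_subtrees_space_component)
    finally show "(\<integral>\<^sup>+ws. (\<Sum>j\<in>S. X j (ws j)) \<partial>subtrees_space W) = (\<Sum>j\<in>S. first_moment (\<sigma> / r j))" .
  qed
  finally show ?thesis .
qed

lemma nn_integral_cut_count_square:
  assumes "0 < \<sigma>"
  shows "(\<integral>\<^sup>+ws. ennreal (cut_count \<sigma> (ws i)) * ennreal (cut_count \<sigma> (ws i)) \<partial>subtrees_space W)
    = second_moment \<sigma>"
  using nn_integral_subtrees_space_component[of "\<lambda>\<omega>. ennreal (cut_count \<sigma> \<omega>) * ennreal (cut_count \<sigma> \<omega>)"]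
    borel_measurable_ennreal_cut_count[OF assms]
  by (simp add: second_moment_def ennreal_mult' power2_eq_square cut_count_nonneg)

lemma nn_integral_cut_count_product:
  assumes "0 < \<sigma>" "0 < \<tau>" "i \<noteq> j"
  shows "(\<integral>\<^sup>+ws. ennreal (cut_count \<sigma> (ws i)) * ennreal (cut_count \<tau> (ws j)) \<partial>subtrees_space W)
    = first_moment \<sigma> * first_moment \<tau>"
  using nn_integral_subtrees_space_pair[OF borel_measurable_ennreal_cut_count[OF assms(1)]
      borel_measurable_ennreal_cut_count[OF assms(2)] assms(3)]
  by (simp add: first_moment_def)

lemma second_moment_small:
  assumes "0 < \<sigma>" "\<sigma> < 1"
  shows "second_moment \<sigma> \<le> (\<Sum>S\<in>UNIV. ennreal (pmf W S) *
    ((\<Sum>j\<in>S. second_moment (\<sigma> / r j)) + (\<Sum>j\<in>S. first_moment (\<sigma> / r j))\<^sup>2))"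
proof -
  define X where "X j \<omega> = ennreal (cut_count (\<sigma> / r j) \<omega>)" for j \<omega>
  have X: "X j \<in> borel_measurable P" for j
    unfolding X_def using assms by (intro borel_measurable_ennreal_cut_count divide_r_pos)
  have XX: "(\<lambda>ws. X i (ws i) * X j (ws j)) \<in> borel_measurable (subtrees_space W)" for i j
    using X by (intro borel_measurable_times_ennreal measurable_compose[OF measurable_subtrees_space_component])
  have cross: "(\<integral>\<^sup>+ws. X i (ws i) * X j (ws j) \<partial>subtrees_space W)
      \<le> (if i = j then second_moment (\<sigma> / r i) else 0) + first_moment (\<sigma> / r i) * first_moment (\<sigma> / r j)"
    for i j
    using assms divide_r_pos
    by (cases "i = j") (simp_all add: X_def nn_integral_cut_count_square nn_integral_cut_count_product)
  have "second_moment \<sigma> = (\<integral>\<^sup>+\<omega>. (\<Sum>j\<in>\<omega> []. X j (subtree j \<omega>))\<^sup>2 \<partial>P)"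
    using assms unfolding second_moment_def X_def
    by (simp add: cut_count_small cut_count_nonneg sum_nonneg ennreal_power[symmetric])
  also have "\<dots> = (\<Sum>S\<in>UNIV. ennreal (pmf W S) *
      (\<integral>\<^sup>+ws. (\<Sum>i\<in>S. \<Sum>j\<in>S. X i (ws i) * X j (ws j)) \<partial>subtrees_space W))"
    by (subst nn_integral_root_subtrees[where G = "\<lambda>S ws. \<Sum>i\<in>S. \<Sum>j\<in>S. X i (ws i) * X j (ws j)",
          symmetric])
      (auto intro!: borel_measurable_sum XX simp: power2_eq_square sum_product)
  also have "\<dots> = (\<Sum>S\<in>UNIV. ennreal (pmf W S) *
      (\<Sum>i\<in>S. \<Sum>j\<in>S. \<integral>\<^sup>+ws. X i (ws i) * X j (ws j) \<partial>subtrees_space W))"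
    using XX by (simp add: nn_integral_sum borel_measurable_sum)
  also have "\<dots> \<le> (\<Sum>S\<in>UNIV. ennreal (pmf W S) * (\<Sum>i\<in>S. \<Sum>j\<in>S.
      (if i = j then second_moment (\<sigma> / r i) else 0) + first_moment (\<sigma> / r i) * first_moment (\<sigma> / r j)))"
    by (intro sum_mono mult_left_mono cross) auto
  also have "\<dots> = (\<Sum>S\<in>UNIV. ennreal (pmf W S) *
      ((\<Sum>j\<in>S. second_moment (\<sigma> / r j)) + (\<Sum>j\<in>S. first_moment (\<sigma> / r j))\<^sup>2))"
    by (simp only: sum_diagonal_plus_products finite)
  finally show ?thesis .
qed

lemma ennreal_expectation:
  "(\<And>S. 0 \<le> g S) \<Longrightarrow>
    (\<Sum>S\<in>UNIV. ennreal (pmf W S) * ennreal (g S)) = ennreal (\<Sum>S\<in>UNIV. pmf W S * g S)"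
  by (simp add: ennreal_mult[symmetric] sum_nonneg)

lemma malthusian_scaled: "(\<Sum>S\<in>UNIV. pmf W S * (\<Sum>j\<in>S. c * r j powr \<delta>)) = c"
proof -
  have "(\<Sum>S\<in>UNIV. pmf W S * (\<Sum>j\<in>S. c * r j powr \<delta>)) = (\<Sum>S\<in>UNIV. c * (pmf W S * (\<Sum>j\<in>S. r j powr \<delta>)))"
    by (intro sum.cong) (auto simp: sum_distrib_left[symmetric])
  also have "\<dots> = c"
    using malthusian by (simp add: sum_distrib_left[symmetric])
  finally show ?thesis .
qed

lemma expectation_linear:
  "(\<Sum>S\<in>UNIV. pmf W S * (c\<^sup>2 * (a * A S + b * B S)))
    = c\<^sup>2 * (a * (\<Sum>S\<in>UNIV. pmf W S * A S) + b * (\<Sum>S\<in>UNIV. pmf W S * B S))"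
  by (simp add: sum_distrib_left sum.distrib mult.assoc mult.left_commute distrib_left)

lemma first_moment_ge: "0 < \<sigma> \<Longrightarrow> ennreal (\<sigma> powr - \<delta>) \<le> first_moment \<sigma>"
proof (induction rule: scale_induct)
  case (large \<sigma>)
  then have "\<sigma> powr - \<delta> \<le> 1"
    using delta_pos by (simp add: powr_minus_divide ge_one_powr_ge_zero)
  then show ?case
    using large by (simp add: first_moment_large)
next
  case (small \<sigma>)
  have "ennreal (\<sigma> powr - \<delta>) = ennreal (\<Sum>S\<in>UNIV. pmf W S * (\<Sum>j\<in>S. \<sigma> powr - \<delta> * r j powr \<delta>))"
    by (simp add: malthusian_scaled)
  also have "\<dots> = (\<Sum>S\<in>UNIV. ennreal (pmf W S) * (\<Sum>j\<in>S. ennreal ((\<sigma> / r j) powr - \<delta>)))"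
    using small by (simp add: ennreal_expectation[symmetric] sum_nonneg powr_delta_divide)
  also have "\<dots> \<le> (\<Sum>S\<in>UNIV. ennreal (pmf W S) * (\<Sum>j\<in>S. first_moment (\<sigma> / r j)))"
    by (intro sum_mono mult_left_mono small.IH) auto
  also have "\<dots> = first_moment \<sigma>"
    using small by (simp add: first_moment_small)
  finally show ?case .
qed

definition C1 :: real where
  "C1 = rmin powr - \<delta>"

lemma C1_pos: "0 < C1"
  using rmin by (simp add: C1_def)

lemma one_le_C1: "0 < \<sigma> \<Longrightarrow> \<sigma> < 1 / rmin \<Longrightarrow> 1 \<le> C1 * \<sigma> powr - \<delta>"
proof -
  assume "0 < \<sigma>" "\<sigma> < 1 / rmin"
  then have "0 < rmin * \<sigma>" "rmin * \<sigma> \<le> 1"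
    using rmin by (auto simp: field_simps)
  then have "(rmin * \<sigma>) powr \<delta> \<le> 1" "0 < (rmin * \<sigma>) powr \<delta>"
    using delta_pos by (auto intro: powr_le1)
  then have "1 \<le> (rmin * \<sigma>) powr - \<delta>"
    by (simp add: powr_minus_divide)
  then show ?thesis
    using rmin \<open>0 < \<sigma>\<close> by (simp add: C1_def powr_mult)
qed

lemma divide_r_less: "\<sigma> < 1 \<Longrightarrow> \<sigma> / r j < 1 / rmin"
proof -
  assume "\<sigma> < 1"
  then have "\<sigma> / r j < 1 / r j"
    using r_pos[of j] by (rule divide_strict_right_mono)
  also have "\<dots> \<le> 1 / rmin"
    using rmin r_pos[of j] by (intro divide_left_mono) auto
  finally show ?thesis .
qed

lemma first_moment_le:
  assumes "0 < \<sigma>" "\<sigma> < 1 / rmin"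
  shows "first_moment \<sigma> \<le> ennreal (C1 * \<sigma> powr - \<delta>)"
proof -
  have "\<sigma> < 1 / rmin \<longrightarrow> first_moment \<sigma> \<le> ennreal (C1 * \<sigma> powr - \<delta>)"
    using \<open>0 < \<sigma>\<close>
  proof (induction rule: scale_induct)
    case (large \<sigma>)
    then show ?case
      using one_le_C1[of \<sigma>] by (simp add: first_moment_large)
  next
    case (small \<sigma>)
    have "first_moment \<sigma> = (\<Sum>S\<in>UNIV. ennreal (pmf W S) * (\<Sum>j\<in>S. first_moment (\<sigma> / r j)))"
      using small by (simp add: first_moment_small)
    also have "\<dots> \<le> (\<Sum>S\<in>UNIV. ennreal (pmf W S) * (\<Sum>j\<in>S. ennreal (C1 * (\<sigma> / r j) powr - \<delta>)))"
      using small.IH divide_r_less small by (intro sum_mono mult_left_mono) auto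
    also have "\<dots> = ennreal (\<Sum>S\<in>UNIV. pmf W S * (\<Sum>j\<in>S. (C1 * \<sigma> powr - \<delta>) * r j powr \<delta>))"
      using small C1_pos
      by (simp add: ennreal_expectation[symmetric] sum_nonneg powr_delta_divide mult.assoc)
    also have "\<dots> = ennreal (C1 * \<sigma> powr - \<delta>)"
      by (simp only: malthusian_scaled)
    finally show ?case
      by simp
  qed
  with assms show ?thesis
    by simp
qed

definition \<kappa> :: real where
  "\<kappa> = (\<Sum>S\<in>UNIV. pmf W S * (\<Sum>i\<in>S. (r i powr \<delta>)\<^sup>2))"

definition K :: real where
  "K = C1\<^sup>2 * (\<Sum>S\<in>UNIV. pmf W S * (real (card S))\<^sup>2)"

text \<open>The smallest constant for which the induction step of \<open>second_moment_le\<close> works,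
  enlarged by \<open>C1\<^sup>2\<close> for its base case.\<close>
definition C2 :: real where
  "C2 = K / (1 - \<kappa>) + C1\<^sup>2"

lemma kappa_less_1: "\<kappa> < 1"
proof -
  obtain S0 where S0: "0 < pmf W S0" "2 \<le> card S0"
    using ex_branching by blast
  have "(\<Sum>i\<in>S0. (r i powr \<delta>)\<^sup>2) < (\<Sum>i\<in>S0. r i powr \<delta>)"
    using S0 r_powr_delta by (intro sum_strict_mono) (auto simp: power2_eq_square)
  then have "pmf W S0 * (\<Sum>i\<in>S0. (r i powr \<delta>)\<^sup>2) < pmf W S0 * (\<Sum>i\<in>S0. r i powr \<delta>)"
    using S0 by simp
  moreover have "(\<Sum>i\<in>S. (r i powr \<delta>)\<^sup>2) \<le> (\<Sum>i\<in>S. r i powr \<delta>)" for S :: "'a set"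
    using r_powr_delta by (intro sum_mono) (simp add: power2_eq_square mult_le_cancel_right1 less_imp_le)
  ultimately have "\<kappa> < (\<Sum>S\<in>UNIV. pmf W S * (\<Sum>i\<in>S. r i powr \<delta>))"
    unfolding \<kappa>_def by (intro sum_strict_mono_ex1) (auto intro: mult_left_mono)
  then show ?thesis
    using malthusian by simp
qed

lemma C2: "C1\<^sup>2 \<le> C2" "C2 * \<kappa> + K \<le> C2"
proof -
  have "0 \<le> K"
    by (simp add: K_def sum_nonneg)
  then show "C1\<^sup>2 \<le> C2"
    using kappa_less_1 by (simp add: C2_def)
  have "C2 * (1 - \<kappa>) = K + C1\<^sup>2 * (1 - \<kappa>)"
    using kappa_less_1 by (simp add: C2_def field_simps)
  then have "C2 - (C2 * \<kappa> + K) = C1\<^sup>2 * (1 - \<kappa>)"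
    by (simp add: algebra_simps)
  moreover have "0 \<le> C1\<^sup>2 * (1 - \<kappa>)"
    using kappa_less_1 by simp
  ultimately show "C2 * \<kappa> + K \<le> C2"
    by linarith
qed

lemma C2_pos: "0 < C2"
  using C2(1) C1_pos by (meson less_le_trans zero_less_power)

lemma sum_first_moments_le:
  assumes "0 < \<sigma>" "\<sigma> < 1"
  shows "(\<Sum>j\<in>S. first_moment (\<sigma> / r j)) \<le> ennreal (real (card S) * (C1 * \<sigma> powr - \<delta>))"
proof -
  have "first_moment (\<sigma> / r j) \<le> ennreal (C1 * \<sigma> powr - \<delta>)" for j
  proof -
    have "first_moment (\<sigma> / r j) \<le> ennreal (C1 * \<sigma> powr - \<delta> * r j powr \<delta>)"
      using first_moment_le[of "\<sigma> / r j"] assms divide_r_less divide_r_pos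
      by (simp add: powr_delta_divide mult.assoc)
    also have "\<dots> \<le> ennreal (C1 * \<sigma> powr - \<delta>)"
      using C1_pos r_powr_delta[of j] by (intro ennreal_leI mult_left_le) auto
    finally show ?thesis .
  qed
  then have "(\<Sum>j\<in>S. first_moment (\<sigma> / r j)) \<le> (\<Sum>j\<in>S. ennreal (C1 * \<sigma> powr - \<delta>))"
    by (rule sum_mono)
  also have "\<dots> = ennreal (real (card S) * (C1 * \<sigma> powr - \<delta>))"
    using C1_pos by (subst sum_ennreal) auto
  finally show ?thesis .
qed

lemma children_moments_le:
  assumes "0 < \<sigma>" "\<sigma> < 1"
    and IH: "\<And>j. second_moment (\<sigma> / r j) \<le> ennreal (C2 * ((\<sigma> / r j) powr - \<delta>)\<^sup>2)"
  shows "(\<Sum>j\<in>S. second_moment (\<sigma> / r j)) + (\<Sum>j\<in>S. first_moment (\<sigma> / r j))\<^sup>2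
    \<le> ennreal ((\<sigma> powr - \<delta>)\<^sup>2 * (C2 * (\<Sum>j\<in>S. (r j powr \<delta>)\<^sup>2) + C1\<^sup>2 * (real (card S))\<^sup>2))"
proof -
  have "(\<Sum>j\<in>S. second_moment (\<sigma> / r j)) \<le> (\<Sum>j\<in>S. ennreal (C2 * ((\<sigma> / r j) powr - \<delta>)\<^sup>2))"
    using IH by (rule sum_mono)
  also have "\<dots> = ennreal (\<Sum>j\<in>S. C2 * ((\<sigma> / r j) powr - \<delta>)\<^sup>2)"
    using C2_pos by (simp add: sum_ennreal)
  finally have second: "(\<Sum>j\<in>S. second_moment (\<sigma> / r j)) \<le> ennreal (\<Sum>j\<in>S. C2 * ((\<sigma> / r j) powr - \<delta>)\<^sup>2)" .
  have first: "(\<Sum>j\<in>S. first_moment (\<sigma> / r j))\<^sup>2 \<le> ennreal ((real (card S) * (C1 * \<sigma> powr - \<delta>))\<^sup>2)"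
    using sum_first_moments_le[OF assms(1,2), of S] C1_pos
    by (simp add: power_mono ennreal_power[symmetric])
  have "(\<sigma> powr - \<delta>)\<^sup>2 * (C2 * (\<Sum>j\<in>S. (r j powr \<delta>)\<^sup>2) + C1\<^sup>2 * (real (card S))\<^sup>2)
      = (\<Sum>j\<in>S. C2 * ((\<sigma> / r j) powr - \<delta>)\<^sup>2) + (real (card S) * (C1 * \<sigma> powr - \<delta>))\<^sup>2"
    using assms by (simp add: powr_delta_divide sum_distrib_left power_mult_distrib algebra_simps)
  then show ?thesis
    using add_mono[OF second first] C2_pos
    by (simp add: ennreal_plus[symmetric] sum_nonneg del: ennreal_plus)
qed

lemma second_moment_le:
  assumes "0 < \<sigma>" "\<sigma> < 1 / rmin"
  shows "second_moment \<sigma> \<le> ennreal (C2 * (\<sigma> powr - \<delta>)\<^sup>2)"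
proof -
  have "\<sigma> < 1 / rmin \<longrightarrow> second_moment \<sigma> \<le> ennreal (C2 * (\<sigma> powr - \<delta>)\<^sup>2)"
    using \<open>0 < \<sigma>\<close>
  proof (induction rule: scale_induct)
    case (large \<sigma>)
    have "\<sigma> < 1 / rmin \<Longrightarrow> 1 \<le> C1\<^sup>2 * (\<sigma> powr - \<delta>)\<^sup>2"
      using one_le_C1[of \<sigma>] large by (simp add: power_mult_distrib[symmetric] one_le_power)
    then show ?case
      using large C2(1) by (auto simp: second_moment_large intro: order_trans mult_right_mono)
  next
    case (small \<sigma>)
    let ?u = "\<sigma> powr - \<delta>"
    have IH: "second_moment (\<sigma> / r j) \<le> ennreal (C2 * ((\<sigma> / r j) powr - \<delta>)\<^sup>2)" for j
      using small.IH divide_r_less small by auto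
    have "second_moment \<sigma> \<le> (\<Sum>S\<in>UNIV. ennreal (pmf W S) *
        ((\<Sum>j\<in>S. second_moment (\<sigma> / r j)) + (\<Sum>j\<in>S. first_moment (\<sigma> / r j))\<^sup>2))"
      using small(1,2) by (rule second_moment_small)
    also have "\<dots> \<le> (\<Sum>S\<in>UNIV. ennreal (pmf W S) *
        ennreal (?u\<^sup>2 * (C2 * (\<Sum>j\<in>S. (r j powr \<delta>)\<^sup>2) + C1\<^sup>2 * (real (card S))\<^sup>2)))"
      using small(1,2) IH by (intro sum_mono mult_left_mono children_moments_le) auto
    also have "\<dots> = ennreal (\<Sum>S\<in>UNIV. pmf W S *
        (?u\<^sup>2 * (C2 * (\<Sum>j\<in>S. (r j powr \<delta>)\<^sup>2) + C1\<^sup>2 * (real (card S))\<^sup>2)))"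
      using C2_pos by (intro ennreal_expectation) (simp add: sum_nonneg)
    also have "\<dots> = ennreal (?u\<^sup>2 * (C2 * \<kappa> + K))"
      unfolding \<kappa>_def K_def by (subst expectation_linear) (rule refl)
    also have "\<dots> \<le> ennreal (C2 * ?u\<^sup>2)"
      using mult_left_mono[OF C2(2), of "?u\<^sup>2"] by (intro ennreal_leI) (simp add: mult.commute)
    finally show ?case
      by simp
  qed
  with assms show ?thesis
    by simp
qed

lemma prob_many_cut_nodes:
  assumes "0 < \<sigma>" "\<sigma> < 1"
  shows "1 / (4 * C2) \<le> measure P {\<omega>. \<sigma> powr - \<delta> / 2 < cut_count \<sigma> \<omega>}"
proof -
  interpret prob_space P
    by (rule prob_space_gw_space)
  have "\<sigma> * rmin < 1"
    using mult_strict_mono[of \<sigma> 1 rmin 1] assms rmin(1) rmin_less_1 by simp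
  then have "\<sigma> < 1 / rmin"
    using rmin(1) by (simp add: less_divide_eq)
  then have "1 / (4 * C2) \<le> prob {\<omega> \<in> space P. \<sigma> powr - \<delta> / 2 < cut_count \<sigma> \<omega>}"
    using assms C2_pos first_moment_ge[of \<sigma>] second_moment_le[of \<sigma>]
    by (intro paley_zygmund_half) (simp_all add: borel_measurable_cut_count first_moment_def second_moment_def)
  then show ?thesis
    by simp
qed

lemma sets_cut_count:
  assumes "0 < \<sigma>"
  shows "{\<omega>. cut_count \<sigma> \<omega> \<le> c} \<in> sets P" "{\<omega>. c < cut_count \<sigma> \<omega>} \<in> sets P"
proof -
  note borel_measurable_cut_count[OF assms, measurable]
  have "{\<omega> \<in> space P. cut_count \<sigma> \<omega> \<le> c} \<in> sets P" "{\<omega> \<in> space P. c < cut_count \<sigma> \<omega>} \<in> sets P"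
    by measurable
  then show "{\<omega>. cut_count \<sigma> \<omega> \<le> c} \<in> sets P" "{\<omega>. c < cut_count \<sigma> \<omega>} \<in> sets P"
    by simp_all
qed

text \<open>Each subtree rooted in generation \<open>n\<close> has, at the scale \<open>\<sigma>'\<close> obtained by dividing \<open>\<sigma>\<close> by
  the weight of its root, at most half of the lower bound \<open>\<sigma>' powr - \<delta>\<close> on the mean number
  of cut nodes.\<close>
fun sparse_at :: "nat \<Rightarrow> real \<Rightarrow> ('a list \<Rightarrow> 'a set) \<Rightarrow> bool" where
  "sparse_at 0 \<sigma> \<omega> \<longleftrightarrow> cut_count \<sigma> \<omega> \<le> \<sigma> powr - \<delta> / 2"
| "sparse_at (Suc n) \<sigma> \<omega> \<longleftrightarrow> (\<forall>j\<in>\<omega> []. sparse_at n (\<sigma> / r j) (subtree j \<omega>))"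

lemma sets_sparse_at: "0 < \<sigma> \<Longrightarrow> {\<omega>. sparse_at n \<sigma> \<omega>} \<in> sets P"
proof (induction n arbitrary: \<sigma>)
  case 0
  then show ?case
    using sets_cut_count(1) by (simp only: sparse_at.simps)
next
  case (Suc n)
  then show ?case
    using sets_all_subtrees[of "\<lambda>j. {\<omega>. sparse_at n (\<sigma> / r j) \<omega>}"] divide_r_pos by simp
qed

definition sparse_bound :: real where
  "sparse_bound = 1 - 1 / (4 * C2)"

lemma sparse_bound: "0 \<le> sparse_bound" "sparse_bound < 1"
proof -
  have "1 / (4 * C2) \<le> measure P {\<omega>. (1 / 2) powr - \<delta> / 2 < cut_count (1 / 2) \<omega>}"
    by (rule prob_many_cut_nodes) auto
  also have "\<dots> \<le> 1"
    by (simp add: prob_space.prob_le_1[OF prob_space_gw_space])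
  finally show "0 \<le> sparse_bound"
    by (simp add: sparse_bound_def)
  show "sparse_bound < 1"
    using C2_pos by (simp add: sparse_bound_def)
qed

lemma prob_sparse_at:
  assumes "0 < \<sigma>" "\<sigma> < rmin ^ n"
  shows "measure P {\<omega>. sparse_at n \<sigma> \<omega>} \<le> (F ^^ n) sparse_bound"
  using assms
proof (induction n arbitrary: \<sigma>)
  case 0
  interpret prob_space P
    by (rule prob_space_gw_space)
  let ?many = "{\<omega>. \<sigma> powr - \<delta> / 2 < cut_count \<sigma> \<omega>}"
  have "{\<omega>. sparse_at 0 \<sigma> \<omega>} = space P - ?many"
    by auto
  then have "prob {\<omega>. sparse_at 0 \<sigma> \<omega>} = 1 - prob ?many"
    by (simp only: prob_compl[OF sets_cut_count(2)[OF \<open>0 < \<sigma>\<close>]])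
  then show ?case
    using prob_many_cut_nodes[of \<sigma>] 0 by (simp add: sparse_bound_def)
next
  case (Suc n)
  have small: "\<sigma> / r j < rmin ^ n" for j
  proof -
    have "\<sigma> < rmin * rmin ^ n"
      using Suc.prems by simp
    also have "\<dots> \<le> r j * rmin ^ n"
      using rmin by (intro mult_right_mono) auto
    finally show ?thesis
      using r_pos[of j] by (simp add: divide_less_eq mult.commute)
  qed
  have "measure P {\<omega>. sparse_at (Suc n) \<sigma> \<omega>}
      = (\<Sum>S\<in>UNIV. pmf W S * (\<Prod>j\<in>S. measure P {\<omega>. sparse_at n (\<sigma> / r j) \<omega>}))"
    using measure_all_subtrees[of "\<lambda>j. {\<omega>. sparse_at n (\<sigma> / r j) \<omega>}"] sets_sparse_at
      Suc.prems divide_r_pos by simp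
  also have "\<dots> \<le> (\<Sum>S\<in>UNIV. pmf W S * (\<Prod>j\<in>S. (F ^^ n) sparse_bound))"
    using Suc.IH Suc.prems small divide_r_pos by (intro sum_mono mult_left_mono prod_mono) auto
  finally show ?case
    by (simp add: F_def[of "(F ^^ n) sparse_bound"])
qed

lemma sets_extinct: "{\<omega>. gw_gen \<omega> n = {}} \<in> sets P"
  and prob_extinct: "measure P {\<omega>. gw_gen \<omega> n = {}} = (F ^^ n) 0"
proof (induction n)
  case (Suc n)
  have eq: "{\<omega>. gw_gen \<omega> (Suc n) = {}} = {\<omega>. \<forall>j\<in>\<omega> []. subtree j \<omega> \<in> {\<omega>. gw_gen \<omega> n = {}}}"
    by (auto simp: gw_gen_Suc_subtrees simp del: gw_gen.simps)
  { case 1 show ?case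
      unfolding eq using Suc by (intro sets_all_subtrees) }
  { case 2 show ?case
      unfolding eq using Suc by (subst measure_all_subtrees) (simp_all add: F_def[of "(F ^^ n) 0"]) }
qed simp_all

lemma sparse_at_if_extinct: "gw_gen \<omega> n = {} \<Longrightarrow> sparse_at n \<sigma> \<omega>"
proof (induction n arbitrary: \<sigma> \<omega>)
  case (Suc n)
  then show ?case
    by (auto simp: gw_gen_Suc_subtrees simp del: gw_gen.simps)
qed simp

definition \<theta> :: real where
  "\<theta> = rmin powr \<delta>"

lemma \<theta>: "0 < \<theta>" "\<theta> \<le> r j powr \<delta>" "\<theta> \<le> 1"
proof -
  show "0 < \<theta>" "\<theta> \<le> r j powr \<delta>"
    using rmin delta_pos by (auto simp: \<theta>_def intro: powr_mono2)
  then show "\<theta> \<le> 1"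
    using r_powr_delta(2)[of j] by simp
qed

lemma many_cut_nodes_unless_sparse:
  assumes "0 < \<rho>" "\<not> sparse_at n \<rho> \<omega>"
  shows "\<rho> powr - \<delta> * \<theta> ^ n / 2 < cut_count \<rho> \<omega>"
  using assms
proof (induction n arbitrary: \<rho> \<omega>)
  case (Suc n)
  show ?case
  proof (cases "\<rho> < 1")
    case True
    from Suc.prems obtain j where j: "j \<in> \<omega> []" "\<not> sparse_at n (\<rho> / r j) (subtree j \<omega>)"
      by auto
    have "\<rho> powr - \<delta> * \<theta> ^ Suc n / 2 \<le> (\<rho> powr - \<delta> * r j powr \<delta>) * \<theta> ^ n / 2"
      using \<theta>(1) \<theta>(2)[of j] by (simp add: mult.assoc mult_left_mono mult_right_mono)
    also have "\<dots> < cut_count (\<rho> / r j) (subtree j \<omega>)"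
      using Suc.IH[OF divide_r_pos[OF Suc.prems(1)] j(2)] Suc.prems by (simp add: powr_delta_divide)
    also have "\<dots> \<le> cut_count \<rho> \<omega>"
      using j(1) Suc.prems True
      by (simp add: cut_count_small) (intro member_le_sum cut_count_nonneg finite; simp)
    finally show ?thesis .
  next
    case False
    then have "\<rho> powr - \<delta> \<le> 1"
      using delta_pos by (simp add: powr_minus_divide ge_one_powr_ge_zero)
    moreover have "\<theta> ^ Suc n \<le> 1"
      using \<theta>(1,3) by (intro power_le_one) auto
    ultimately have "\<rho> powr - \<delta> * \<theta> ^ Suc n \<le> 1"
      using \<theta>(1) by (intro mult_le_one) auto
    then show ?thesis
      using False by (simp add: cut_count_large)
  qed
qed simp

lemma nonextinct_eq: "{\<omega>. nonextinct \<omega>} = space P - (\<Union>n. {\<omega>. gw_gen \<omega> n = {}})"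
  by (auto simp: nonextinct_def)

lemma sets_nonextinct: "{\<omega>. nonextinct \<omega>} \<in> sets P"
  unfolding nonextinct_eq using sets_extinct by blast

lemma prob_nonextinct: "measure P {\<omega>. nonextinct \<omega>} = 1 - q"
proof -
  interpret prob_space P
    by (rule prob_space_gw_space)
  let ?E = "\<lambda>n. {\<omega>. gw_gen \<omega> n = {}}"
  have "incseq ?E"
    by (intro incseq_SucI) (auto intro: gw_gen_empty_mono)
  then have "(\<lambda>n. prob (?E n)) \<longlonglongrightarrow> prob (\<Union>n. ?E n)"
    using sets_extinct by (intro finite_Lim_measure_incseq) auto
  moreover have "(\<lambda>n. prob (?E n)) \<longlonglongrightarrow> q"
    using iterates_tendsto_q[of 0] by (simp add: prob_extinct)
  ultimately have "prob (\<Union>n. ?E n) = q"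
    by (rule LIMSEQ_unique)
  moreover have "(\<Union>n. ?E n) \<in> events"
    using sets_extinct by auto
  ultimately show ?thesis
    by (simp only: nonextinct_eq prob_compl)
qed

lemma prob_nonextinct_few_cut_nodes:
  assumes "0 < \<rho>" "\<rho> < rmin ^ n"
  shows "measure P {\<omega>. nonextinct \<omega> \<and> cut_count \<rho> \<omega> \<le> \<rho> powr - \<delta> * \<theta> ^ n / 2}
    \<le> (F ^^ n) sparse_bound - (F ^^ n) 0"
proof -
  interpret prob_space P
    by (rule prob_space_gw_space)
  have "{\<omega>. nonextinct \<omega> \<and> cut_count \<rho> \<omega> \<le> \<rho> powr - \<delta> * \<theta> ^ n / 2}
      \<subseteq> {\<omega>. sparse_at n \<rho> \<omega>} - {\<omega>. gw_gen \<omega> n = {}}"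
    using many_cut_nodes_unless_sparse[OF assms(1)] by (force simp: nonextinct_def)
  then have "prob {\<omega>. nonextinct \<omega> \<and> cut_count \<rho> \<omega> \<le> \<rho> powr - \<delta> * \<theta> ^ n / 2}
      \<le> prob ({\<omega>. sparse_at n \<rho> \<omega>} - {\<omega>. gw_gen \<omega> n = {}})"
    using assms sets_sparse_at sets_extinct by (intro finite_measure_mono) auto
  also have "\<dots> = prob {\<omega>. sparse_at n \<rho> \<omega>} - prob {\<omega>. gw_gen \<omega> n = {}}"
    using assms sets_sparse_at sets_extinct sparse_at_if_extinct by (intro finite_measure_Diff) auto
  also have "\<dots> \<le> (F ^^ n) sparse_bound - (F ^^ n) 0"
    using prob_sparse_at[OF assms] by (simp add: prob_extinct)
  finally show ?thesis .
qed

lemma cut_set_eq_stopping_set: "\<rho> < 1 \<Longrightarrow> cut_set r \<rho> = stopping_set r \<rho>"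
  using r_pos r_less_1 by (intro stopping_set_eq_cut_set[symmetric]) (auto intro: less_imp_le)

lemma powr_neg_le_if_small:
  assumes "\<alpha> < \<delta>" "0 < c" "0 < \<rho>" "\<rho> \<le> c powr (1 / (\<delta> - \<alpha>))"
  shows "\<rho> powr - \<alpha> \<le> \<rho> powr - \<delta> * c"
proof -
  have "\<rho> powr (\<delta> - \<alpha>) \<le> (c powr (1 / (\<delta> - \<alpha>))) powr (\<delta> - \<alpha>)"
    using assms by (intro powr_mono2) auto
  also have "\<dots> = c"
    using assms by (simp add: powr_powr)
  finally have "\<rho> powr - \<delta> * \<rho> powr (\<delta> - \<alpha>) \<le> \<rho> powr - \<delta> * c"
    by (simp add: mult_left_mono)
  then show ?thesis
    by (simp add: powr_add[symmetric])
qed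

lemma prob_nonextinct_many_cut_nodes:
  assumes "0 < \<rho>" "\<rho> < rmin ^ n" "\<rho> powr - \<alpha> \<le> \<rho> powr - \<delta> * \<theta> ^ n / 2"
  shows "(1 - q) - ((F ^^ n) sparse_bound - (F ^^ n) 0)
    \<le> measure P {\<omega>. \<rho> powr - \<alpha> < cut_count \<rho> \<omega> \<and> nonextinct \<omega>}"
proof -
  interpret prob_space P
    by (rule prob_space_gw_space)
  define Many where "Many = {\<omega>. \<rho> powr - \<alpha> < cut_count \<rho> \<omega> \<and> nonextinct \<omega>}"
  define Few where "Few = {\<omega>. nonextinct \<omega> \<and> cut_count \<rho> \<omega> \<le> \<rho> powr - \<delta> * \<theta> ^ n / 2}"
  have Many: "Many \<in> events"
    unfolding Many_def Collect_conj_eq using assms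
    by (intro sets.Int sets_cut_count(2) sets_nonextinct) simp
  have "{\<omega>. nonextinct \<omega>} - Many \<subseteq> Few"
    using assms(3) by (auto simp: Many_def Few_def)
  moreover have "Few \<in> events"
    unfolding Few_def Collect_conj_eq using assms
    by (intro sets.Int sets_cut_count(1) sets_nonextinct) simp
  ultimately have "prob ({\<omega>. nonextinct \<omega>} - Many) \<le> prob Few"
    by (rule finite_measure_mono)
  also have "\<dots> \<le> (F ^^ n) sparse_bound - (F ^^ n) 0"
    unfolding Few_def using assms by (intro prob_nonextinct_few_cut_nodes)
  finally have "prob ({\<omega>. nonextinct \<omega>} - Many) \<le> (F ^^ n) sparse_bound - (F ^^ n) 0" .
  moreover have "prob ({\<omega>. nonextinct \<omega>} - Many) = (1 - q) - prob Many"
    using Many sets_nonextinct prob_nonextinct by (subst finite_measure_Diff) (auto simp: Many_def)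
  ultimately show ?thesis
    by (simp add: Many_def)
qed

lemma conditional_prob_many_cut_nodes:
  assumes "\<alpha> < \<delta>" "0 < \<epsilon>"
  shows "\<exists>\<rho>0>0. \<forall>\<rho>. 0 < \<rho> \<and> \<rho> < \<rho>0 \<longrightarrow>
    measure P {\<omega>. real (card (gw_tree \<omega> \<inter> cut_set r \<rho>)) > \<rho> powr - \<alpha> \<and> nonextinct \<omega>}
      / measure P {\<omega>. nonextinct \<omega>} > 1 - \<epsilon>"
proof -
  have "(\<lambda>n. (F ^^ n) sparse_bound - (F ^^ n) 0) \<longlonglongrightarrow> q - q"
    using sparse_bound by (intro tendsto_diff iterates_tendsto_q) auto
  moreover have "0 < \<epsilon> * (1 - q)"
    using assms q by simp
  ultimately obtain n where n: "(F ^^ n) sparse_bound - (F ^^ n) 0 < \<epsilon> * (1 - q)"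
    using order_tendstoD(2) eventually_sequentially by fastforce
  define \<rho>0 where "\<rho>0 = min (rmin ^ n) ((\<theta> ^ n / 2) powr (1 / (\<delta> - \<alpha>)))"
  have "0 < \<rho>0"
    using rmin \<theta> by (simp add: \<rho>0_def)
  moreover have "measure P {\<omega>. real (card (gw_tree \<omega> \<inter> cut_set r \<rho>)) > \<rho> powr - \<alpha> \<and> nonextinct \<omega>}
      / measure P {\<omega>. nonextinct \<omega>} > 1 - \<epsilon>" if \<rho>: "0 < \<rho>" "\<rho> < \<rho>0" for \<rho>
  proof -
    have "\<rho> < rmin ^ n" "rmin ^ n \<le> 1"
      using \<rho> rmin(1) rmin_less_1 by (auto simp: \<rho>0_def intro: power_le_one)
    moreover have "\<rho> powr - \<alpha> \<le> \<rho> powr - \<delta> * \<theta> ^ n / 2"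
      using powr_neg_le_if_small[of \<alpha> "\<theta> ^ n / 2" \<rho>] assms \<rho> \<theta> by (simp add: \<rho>0_def)
    ultimately have "(1 - \<epsilon>) * (1 - q)
        < measure P {\<omega>. \<rho> powr - \<alpha> < cut_count \<rho> \<omega> \<and> nonextinct \<omega>}"
      using prob_nonextinct_many_cut_nodes[of \<rho> n \<alpha>] \<rho> n by (simp add: algebra_simps)
    moreover have "cut_set r \<rho> = stopping_set r \<rho>"
      using \<open>\<rho> < rmin ^ n\<close> \<open>rmin ^ n \<le> 1\<close> by (intro cut_set_eq_stopping_set) simp
    ultimately show ?thesis
      using q by (simp add: cut_count_def prob_nonextinct less_divide_eq)
  qed
  ultimately show ?thesis
    by blast
qed

end

theorem corollary5p5:
  fixes W :: "('a::finite) set pmf" and r :: "'a \<Rightarrow> real" and \<delta> :: real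
  assumes r_range: "\<And>i. 0 < r i \<and> r i < 1"
    and W_pos: "\<And>i. measure_pmf.prob W {S. i \<in> S} > 0"
    and supercritical: "measure_pmf.expectation W (\<lambda>S. real (card S)) > 1"
    and delta: "measure_pmf.expectation W (\<lambda>S. \<Sum>i\<in>S. r i powr \<delta>) = 1"
  shows "\<forall>\<alpha> < \<delta>. \<forall>\<epsilon> > 0. \<exists>\<rho>0 > 0. \<forall>\<rho>. 0 < \<rho> \<and> \<rho> < \<rho>0 \<longrightarrow>
     prob_space.prob (gw_space W)
        {\<omega> \<in> space (gw_space W). real (card (gw_tree \<omega> \<inter> cut_set r \<rho>)) > \<rho> powr (-\<alpha>) \<and> nonextinct \<omega>}
     / prob_space.prob (gw_space W) {\<omega> \<in> space (gw_space W). nonextinct \<omega>}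
     > 1 - \<epsilon>"
proof -
  have expectation: "measure_pmf.expectation W f = (\<Sum>S\<in>UNIV. pmf W S * f S)" for f :: "'a set \<Rightarrow> real"
    by (subst integral_measure_pmf_real[where A = UNIV]) (auto simp: mult.commute)
  interpret gw_weights W r \<delta>
    using r_range supercritical delta by unfold_locales (auto simp: expectation)
  show ?thesis
    using conditional_prob_many_cut_nodes by simp
qed

end
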